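(* For every locally-dominated input $\mathit{in} \in \mathcal{T}$, there exists a subset $S \subseteq \mathcal{T}$ consisting only of inputs that are not locally dominated, such that $\mathit{in} \sqsubseteq S$.
   Context: $\mathcal{T}$ is a finite set of inputs. Each input $\mathit{in}$ covers a nonempty finite set $\mathrm{Obj}(\mathit{in})$ of objectives and has a cost $c(\mathit{in}) > 0$. For $S \subseteq \mathcal{T}$, $\mathrm{Obj}(S) = \bigcup_{\mathit{in} \in S} \mathrm{Obj}(\mathit{in})$ and $c(S) = \sum_{\mathit{in} \in S} c(\mathit{in})$. There are no duplicates: two distinct inputs of $\mathcal{T}$ never have both the same set of covered objectives and the same cost. Local dominance of an input by a subset: for $\mathit{in} \in \mathcal{T}$ and $S \subseteq \mathcal{T}$, $\mathit{in} \sqsubseteq S$ iff $\mathit{in} \notin S$, $\mathrm{Obj}(\mathit{in}) \subseteq \mathrm{Obj}(S)$ and $c(\mathit{in}) \ge c(S)$. An input $\mathit{in} \in \mathcal{T}$ is locally dominated iff there exists $S \subseteq \mathcal{T}$ with $\mathit{in} \sqsubseteq S$. *)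

theory Defs
  imports Complex_Main
begin

definition ObjS :: "('i \<Rightarrow> 'o set) \<Rightarrow> 'i set \<Rightarrow> 'o set" where
  "ObjS Obj S = (\<Union>x\<in>S. Obj x)"

definition costS :: "('i \<Rightarrow> real) \<Rightarrow> 'i set \<Rightarrow> real" where
  "costS c S = (\<Sum>x\<in>S. c x)"

definition loc_dom_by :: "('i \<Rightarrow> 'o set) \<Rightarrow> ('i \<Rightarrow> real) \<Rightarrow> 'i \<Rightarrow> 'i set \<Rightarrow> bool" where
  "loc_dom_by Obj c x S \<longleftrightarrow> x \<notin> S \<and> Obj x \<subseteq> ObjS Obj S \<and> c x \<ge> costS c S"

definition locally_dominated :: "'i set \<Rightarrow> ('i \<Rightarrow> 'o set) \<Rightarrow> ('i \<Rightarrow> real) \<Rightarrow> 'i \<Rightarrow> bool" where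
  "locally_dominated T Obj c x \<longleftrightarrow> (\<exists>S. S \<subseteq> T \<and> loc_dom_by Obj c x S)"

end

theory Submission
  imports Defs
begin

text \<open>Order the inputs of \<open>T\<close> by cost, and inputs of equal cost by reverse inclusion of
  their objective sets. Every member of a dominating set lies strictly below the input it
  dominates (costs are positive and there are no duplicates), and the order is well-founded
  since \<open>T\<close> is finite. So by well-founded induction each dominated member of a dominating set
  can be replaced by an undominated set dominating it; the union of these replacements still
  covers the objectives, and by subadditivity of the cost it is still cheap enough.\<close>

lemma costS_UN_le:
  fixes c :: "'i \<Rightarrow> real"
  assumes "finite A" "\<And>z. z \<in> A \<Longrightarrow> finite (F z)"
    and "\<And>x. x \<in> (\<Union>z\<in>A. F z) \<Longrightarrow> 0 \<le> c x"
  shows "costS c (\<Union>z\<in>A. F z) \<le> (\<Sum>z\<in>A. costS c (F z))"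
proof -
  have "(\<Union>z\<in>A. F z) = snd ` Sigma A F" by force
  then have "costS c (\<Union>z\<in>A. F z) \<le> sum (c \<circ> snd) (Sigma A F)"
    unfolding costS_def using assms sum_image_le[of "Sigma A F" c snd] by auto
  also have "\<dots> = (\<Sum>z\<in>A. costS c (F z))"
    unfolding costS_def using assms by (simp add: sum.Sigma comp_def split_def)
  finally show ?thesis .
qed

lemma loc_dom_by_UN:
  fixes c :: "'i \<Rightarrow> real"
  assumes dom: "loc_dom_by Obj c x S" and "finite S"
    and F: "\<And>z. z \<in> S \<Longrightarrow> finite (F z) \<and> Obj z \<subseteq> ObjS Obj (F z) \<and> costS c (F z) \<le> c z"
    and nonneg: "\<And>y. y \<in> (\<Union>z\<in>S. F z) \<Longrightarrow> 0 \<le> c y"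
    and "x \<notin> (\<Union>z\<in>S. F z)"
  shows "loc_dom_by Obj c x (\<Union>z\<in>S. F z)"
proof -
  have "Obj x \<subseteq> ObjS Obj (\<Union>z\<in>S. F z)"
    using dom F unfolding loc_dom_by_def ObjS_def by fastforce
  moreover have "costS c (\<Union>z\<in>S. F z) \<le> c x"
  proof -
    have "costS c (\<Union>z\<in>S. F z) \<le> (\<Sum>z\<in>S. costS c (F z))"
      using \<open>finite S\<close> F nonneg by (intro costS_UN_le) auto
    also have "\<dots> \<le> costS c S"
      unfolding costS_def using F by (intro sum_mono) (auto simp: costS_def)
    also have "\<dots> \<le> c x"
      using dom unfolding loc_dom_by_def by simp
    finally show ?thesis .
  qed
  ultimately show ?thesis
    using \<open>x \<notin> (\<Union>z\<in>S. F z)\<close> unfolding loc_dom_by_def by simp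
qed

definition cheaper_or_wider :: "'i set \<Rightarrow> ('i \<Rightarrow> 'o set) \<Rightarrow> ('i \<Rightarrow> real) \<Rightarrow> 'i rel" where
  "cheaper_or_wider T Obj c =
     {(z, y). z \<in> T \<and> y \<in> T \<and> (c z < c y \<or> c z = c y \<and> Obj y \<subset> Obj z)}"

lemma wf_cheaper_or_wider:
  assumes "finite T"
  shows "wf (cheaper_or_wider T Obj c)"
proof -
  let ?R = "cheaper_or_wider T Obj c"
  have "?R \<subseteq> T \<times> T"
    unfolding cheaper_or_wider_def by auto
  then have "finite ?R"
    using assms finite_subset by blast
  moreover have "acyclic ?R"
  proof -
    have "trans ?R" "irrefl ?R"
      unfolding cheaper_or_wider_def trans_def irrefl_def by auto
    then show ?thesis
      by (simp add: acyclic_irrefl trancl_id)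
  qed
  ultimately show ?thesis
    by (simp add: wf_iff_acyclic_if_finite)
qed

lemma loc_dom_by_member_cheaper_or_wider:
  fixes c :: "'i \<Rightarrow> real"
  assumes pos: "\<And>x. x \<in> T \<Longrightarrow> 0 < c x"
    and no_dup: "\<And>x y. x \<in> T \<Longrightarrow> y \<in> T \<Longrightarrow> x \<noteq> y \<Longrightarrow> \<not> (Obj x = Obj y \<and> c x = c y)"
    and "finite S" "S \<subseteq> T" "y \<in> T" and dom: "loc_dom_by Obj c y S" and "z \<in> S"
  shows "(z, y) \<in> cheaper_or_wider T Obj c"
proof -
  have "z \<in> T" "z \<noteq> y"
    using \<open>S \<subseteq> T\<close> \<open>z \<in> S\<close> dom unfolding loc_dom_by_def by auto
  have split: "c z + sum c (S - {z}) \<le> c y"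
    using dom sum.remove[OF \<open>finite S\<close> \<open>z \<in> S\<close>, of c]
    unfolding loc_dom_by_def costS_def by linarith
  have rest_nonneg: "0 \<le> sum c (S - {z})"
    using pos \<open>S \<subseteq> T\<close> by (intro sum_nonneg) (auto intro: less_imp_le)
  show ?thesis
  proof (cases "c z = c y")
    case True
    have "S - {z} = {}"
    proof (rule ccontr)
      assume "S - {z} \<noteq> {}"
      then have "0 < sum c (S - {z})"
        using pos \<open>finite S\<close> \<open>S \<subseteq> T\<close> by (intro sum_pos) auto
      with split True show False by simp
    qed
    then have "S = {z}" using \<open>z \<in> S\<close> by auto
    then have "Obj y \<subseteq> Obj z"
      using dom unfolding loc_dom_by_def ObjS_def by simp
    moreover have "Obj y \<noteq> Obj z"
      using no_dup[OF \<open>z \<in> T\<close> \<open>y \<in> T\<close> \<open>z \<noteq> y\<close>] True by auto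
    ultimately show ?thesis
      using True \<open>z \<in> T\<close> \<open>y \<in> T\<close> unfolding cheaper_or_wider_def by auto
  next
    case False
    then have "c z < c y" using split rest_nonneg by simp
    then show ?thesis
      using \<open>z \<in> T\<close> \<open>y \<in> T\<close> unfolding cheaper_or_wider_def by auto
  qed
qed

lemma loc_dom_by_refinement:
  fixes c :: "'i \<Rightarrow> real"
  assumes "finite T" and pos: "\<And>x. x \<in> T \<Longrightarrow> 0 < c x"
    and dom: "loc_dom_by Obj c y S" and "S \<subseteq> T" and "\<not> P y"
    and cover: "\<And>z. z \<in> S \<Longrightarrow> \<exists>F. F \<subseteq> T \<and> (\<forall>w\<in>F. P w) \<and> Obj z \<subseteq> ObjS Obj F \<and> costS c F \<le> c z"
  shows "\<exists>S'. S' \<subseteq> T \<and> (\<forall>w\<in>S'. P w) \<and> loc_dom_by Obj c y S'"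
proof -
  from cover have "\<forall>z\<in>S. \<exists>F. F \<subseteq> T \<and> (\<forall>w\<in>F. P w) \<and> Obj z \<subseteq> ObjS Obj F \<and> costS c F \<le> c z"
    by blast
  then obtain F where "\<forall>z\<in>S. F z \<subseteq> T \<and> (\<forall>w\<in>F z. P w) \<and> Obj z \<subseteq> ObjS Obj (F z) \<and> costS c (F z) \<le> c z"
    by (rule bchoice[THEN exE])
  then have F_sub: "\<And>z. z \<in> S \<Longrightarrow> F z \<subseteq> T"
    and F_P: "\<forall>w\<in>(\<Union>z\<in>S. F z). P w"
    and F_cover: "\<And>z. z \<in> S \<Longrightarrow> Obj z \<subseteq> ObjS Obj (F z) \<and> costS c (F z) \<le> c z"
    by blast+
  have "finite S" using \<open>S \<subseteq> T\<close> \<open>finite T\<close> finite_subset by blast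
  have "loc_dom_by Obj c y (\<Union>z\<in>S. F z)"
  proof (rule loc_dom_by_UN[OF dom \<open>finite S\<close>])
    show "finite (F z) \<and> Obj z \<subseteq> ObjS Obj (F z) \<and> costS c (F z) \<le> c z" if "z \<in> S" for z
      using finite_subset[OF F_sub[OF that] \<open>finite T\<close>] F_cover[OF that] by blast
    show "0 \<le> c w" if "w \<in> (\<Union>z\<in>S. F z)" for w
      using F_sub that pos less_imp_le by blast
    show "y \<notin> (\<Union>z\<in>S. F z)"
      using F_P \<open>\<not> P y\<close> by blast
  qed
  moreover have "(\<Union>z\<in>S. F z) \<subseteq> T" using F_sub by blast
  ultimately show ?thesis using F_P by blast
qed

theorem mainTheorem10:
  fixes T :: "'i set" and Obj :: "'i \<Rightarrow> 'o set" and c :: "'i \<Rightarrow> real"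
  assumes "finite T"
    and "\<And>x. x \<in> T \<Longrightarrow> Obj x \<noteq> {} \<and> finite (Obj x)"
    and "\<And>x. x \<in> T \<Longrightarrow> c x > 0"
    and "\<And>x y. x \<in> T \<Longrightarrow> y \<in> T \<Longrightarrow> x \<noteq> y \<Longrightarrow> \<not> (Obj x = Obj y \<and> c x = c y)"
    and "x \<in> T"
    and "locally_dominated T Obj c x"
  shows "\<exists>S. S \<subseteq> T \<and> (\<forall>y\<in>S. \<not> locally_dominated T Obj c y) \<and> loc_dom_by Obj c x S"
proof -
  let ?undom = "\<lambda>w. \<not> locally_dominated T Obj c w"
  have "y \<in> T \<Longrightarrow> locally_dominated T Obj c y \<Longrightarrow>
      \<exists>S. S \<subseteq> T \<and> (\<forall>w\<in>S. ?undom w) \<and> loc_dom_by Obj c y S" for y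
    using wf_cheaper_or_wider[OF assms(1), of Obj c]
  proof (induction y rule: wf_induct_rule)
    case (less y)
    obtain S where "S \<subseteq> T" and dom: "loc_dom_by Obj c y S"
      using less.prems unfolding locally_dominated_def by blast
    have "finite S" using \<open>S \<subseteq> T\<close> assms(1) finite_subset by blast
    show ?case
    proof (rule loc_dom_by_refinement[OF assms(1,3) dom \<open>S \<subseteq> T\<close>])
      show "\<not> ?undom y" using less.prems(2) by simp
      fix z assume "z \<in> S"
      with \<open>S \<subseteq> T\<close> have "z \<in> T" ..
      show "\<exists>F. F \<subseteq> T \<and> (\<forall>w\<in>F. ?undom w) \<and> Obj z \<subseteq> ObjS Obj F \<and> costS c F \<le> c z"
      proof (cases "locally_dominated T Obj c z")
        case True
        have "(z, y) \<in> cheaper_or_wider T Obj c"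
          by (rule loc_dom_by_member_cheaper_or_wider[OF assms(3,4) \<open>finite S\<close> \<open>S \<subseteq> T\<close>
                less.prems(1) dom \<open>z \<in> S\<close>])
        from less.IH[OF this \<open>z \<in> T\<close> True] show ?thesis
          unfolding loc_dom_by_def by blast
      next
        case False
        with \<open>z \<in> T\<close> show ?thesis by (intro exI[of _ "{z}"]) (simp add: ObjS_def costS_def)
      qed
    qed
  qed
  then show ?thesis using assms(5,6) .
qed

end
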